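(* Let $M,N,K$ be positive integers, $s$ a non-negative integer, $X\in\mathbb{R}^{N\times K}$ an $s$-row sparse matrix, and $A\in\mathbb{R}^{M\times N}$. Let $Y=AX$ and $r=\operatorname{rank}(Y)$, and suppose the map $Z\mapsto AZ$ is injective on $\Sigma_{s,r}$. Then: (i) $Y$ can be written as a product $Y=VU$ where $V\in\mathbb{R}^{M\times r}$ with $\operatorname{rank}(V)=r$ and $U\in\mathbb{R}^{r\times K}$ with $UU^T=I_r$ (the $r\times r$ identity matrix); (ii) for any such factorization $Y=VU$, the problem $\operatorname{argmin}_{Z\in\mathbb{R}^{N\times r}}\|Z\|_0$ subject to $AZ=V$ has a unique solution $W\in\mathbb{R}^{N\times r}$, and this $W$ is $s$-row sparse and has full column rank; (iii) $X=WU$.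
   Context: A matrix in $\mathbb{R}^{N\times K}$ is called $s$-row sparse if at most $s$ of its rows are non-zero. $\Sigma_{s,r}$ denotes the set of all $s$-row sparse matrices in $\mathbb{R}^{N\times K}$ of rank at least $r$. For a matrix $Z$, $\|Z\|_0$ denotes the number of non-zero rows of $Z$. *)

theory Defs
  imports "Jordan_Normal_Form.DL_Rank_Submatrix"
begin

definition mrank :: "real mat \<Rightarrow> nat" where
  "mrank A = vec_space.rank (dim_row A) A"

(* ||Z||_0 : number of non-zero rows *)
definition nzrows :: "real mat \<Rightarrow> nat" where
  "nzrows Z = card {i. i < dim_row Z \<and> row Z i \<noteq> 0\<^sub>v (dim_col Z)}"

definition row_sparse :: "nat \<Rightarrow> real mat \<Rightarrow> bool" where
  "row_sparse s Z \<longleftrightarrow> nzrows Z \<le> s"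

definition Sigma_sr :: "nat \<Rightarrow> nat \<Rightarrow> nat \<Rightarrow> nat \<Rightarrow> real mat set" where
  "Sigma_sr s r N K = {Z \<in> carrier_mat N K. row_sparse s Z \<and> mrank Z \<ge> r}"

definition l0_min :: "real mat \<Rightarrow> real mat \<Rightarrow> nat \<Rightarrow> nat \<Rightarrow> real mat \<Rightarrow> bool" where
  "l0_min A V N r W \<longleftrightarrow> W \<in> carrier_mat N r \<and> A * W = V \<and>
     (\<forall>Z \<in> carrier_mat N r. A * Z = V \<longrightarrow> nzrows W \<le> nzrows Z)"

end

theory Submission imports Defs begin

(* Gram-Schmidt on the rows of Y gives U with orthonormal rows spanning the row space, so
   Y = V U with V = Y U^T; a vector in the kernel of V yields U^T c orthogonal to every row of Y
   yet in their span, so V has full column rank r, and rank Y = rank V because U has the right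
   inverse U^T.
   For (ii) and (iii), every solution Z of A Z = V inherits full column rank from V, hence
   rank (Z U) = r. If Z is also s-row sparse, then Z U lies in Sigma_{s,r} together with X and
   A (Z U) = V U = A X, so Z U = X by injectivity and Z = X U^T. As X U^T is itself an s-row
   sparse solution, it is the unique l0-minimiser, and X = (X U^T) U. *)

lemma (in vec_space) rank_le_if_cols_in_span:
  assumes B: "B \<in> carrier_mat n m" and B': "B' \<in> carrier_mat n m'"
    and cols: "set (cols B') \<subseteq> span (set (cols B))"
  shows "rank B' \<le> rank B"
proof -
  have sub_B: "VectorSpace.subspace class_ring (span (set (cols B))) V"
    using B cols_dim[of B] by (simp add: span_is_subspace)
  have sub_B': "VectorSpace.subspace class_ring (span (set (cols B'))) V"
    using B' cols_dim[of B'] by (simp add: span_is_subspace)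
  have "span (set (cols B')) \<subseteq> span (set (cols B))"
    using sub_B cols by (simp add: span_is_subset subspace_def)
  then have "VectorSpace.subspace class_ring (span (set (cols B'))) (span_vs (set (cols B)))"
    by (rule nested_subspaces[OF sub_B sub_B'])
  then show ?thesis
    unfolding rank_def
    using vectorspace.subspace_dim[OF subspace_is_vs[OF sub_B]] fin_dim_span_cols B B' by auto
qed

lemma mrank_mult_le:
  assumes B: "B \<in> carrier_mat n m" and C: "C \<in> carrier_mat m k"
  shows "mrank (B * C) \<le> mrank B"
proof -
  interpret vec_space "TYPE(real)" n .
  have "set (cols (B * C)) \<subseteq> col_space B"
  proof
    fix x assume "x \<in> set (cols (B * C))"
    then obtain j where "j < k" "x = col (B * C) j"
      using B C by (auto simp: in_set_conv_nth)
    then have "x = B *\<^sub>v col C j" and "col C j \<in> carrier_vec m"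
      using B C by auto
    then show "x \<in> col_space B" using B by (auto simp: col_space_eq[OF B])
  qed
  then have "rank (B * C) \<le> rank B"
    using B C by (intro rank_le_if_cols_in_span[of B m "B * C" k]) (auto simp: col_space_def)
  then show ?thesis using B C unfolding mrank_def by simp
qed

lemma mrank_mult_right_invertible:
  assumes B: "B \<in> carrier_mat n m" and C: "C \<in> carrier_mat m k" and D: "D \<in> carrier_mat k m"
    and CD: "C * D = 1\<^sub>m m"
  shows "mrank (B * C) = mrank B"
proof (rule antisym)
  have "B = (B * C) * D" using B C D CD by (simp add: assoc_mult_mat[OF B C D])
  then show "mrank B \<le> mrank (B * C)"
    using mrank_mult_le[OF mult_carrier_mat[OF B C] D] by simp
qed (rule mrank_mult_le[OF B C])

lemma mult_mat_unit_vec: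
  fixes B :: "'a :: semiring_1 mat"
  assumes "B \<in> carrier_mat n k" and "i < k"
  shows "B *\<^sub>v unit_vec k i = col B i"
  using assms by (intro eq_vecI) auto

lemma distinct_cols_if_trivial_kernel:
  fixes B :: "'a :: comm_ring_1 mat"
  assumes B: "B \<in> carrier_mat n k"
    and ker: "\<And>c. c \<in> carrier_vec k \<Longrightarrow> B *\<^sub>v c = 0\<^sub>v n \<Longrightarrow> c = 0\<^sub>v k"
  shows "distinct (cols B)"
proof (rule ccontr)
  assume "\<not> distinct (cols B)"
  then obtain i j where ij: "i < k" "j < k" "i \<noteq> j" "col B i = col B j"
    using B by (auto simp: distinct_conv_nth)
  define c :: "'a vec" where "c = unit_vec k i - unit_vec k j"
  have "B *\<^sub>v c = col B i - col B j"
    unfolding c_def using B ij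
    by (simp add: mult_minus_distrib_mat_vec mult_mat_unit_vec)
  also have "\<dots> = 0\<^sub>v n" using B ij by auto
  finally have "c = 0\<^sub>v k" using ker by (simp add: c_def)
  then have "c $ i = 0" using ij by simp
  then show False using ij by (simp add: c_def)
qed

lemma (in vec_space) rank_lt_ncols_if_not_distinct:
  assumes B: "B \<in> carrier_mat n k" and "\<not> distinct (cols B)"
  shows "rank B < k"
proof -
  obtain S where S: "maximal S (\<lambda>T. T \<subseteq> set (cols B) \<and> lin_indpt T)"
    using maximal_exists[of "\<lambda>T. T \<subseteq> set (cols B) \<and> lin_indpt T" "card (set (cols B))" "{}"]
    by (meson List.finite_set card_mono empty_iff empty_subsetI finite_lin_indpt2 rev_finite_subset)
  then have "card S \<le> card (set (cols B))" by (simp add: card_mono maximal_def)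
  also have "\<dots> < k"
    using B \<open>\<not> distinct (cols B)\<close> card_distinct[of "cols B"] card_length[of "cols B"] by fastforce
  finally show ?thesis using rank_card_indpt[OF B S] by simp
qed

lemma mrank_eq_ncols_iff:
  assumes B: "B \<in> carrier_mat n k"
  shows "mrank B = k \<longleftrightarrow> (\<forall>c \<in> carrier_vec k. B *\<^sub>v c = 0\<^sub>v n \<longrightarrow> c = 0\<^sub>v k)"
proof -
  interpret vec_space "TYPE(real)" n .
  have "rank B = k \<longleftrightarrow> (\<forall>c \<in> carrier_vec k. B *\<^sub>v c = 0\<^sub>v n \<longrightarrow> c = 0\<^sub>v k)"
  proof
    assume rk: "rank B = k"
    then have dist: "distinct (cols B)" using rank_lt_ncols_if_not_distinct[OF B] by auto
    then have "lin_indpt (set (cols B))" using full_rank_lin_indpt[OF B rk] by simp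
    then show "\<forall>c \<in> carrier_vec k. B *\<^sub>v c = 0\<^sub>v n \<longrightarrow> c = 0\<^sub>v k"
      using lin_depI[OF B _ _ _ dist] by blast
  next
    assume ker: "\<forall>c \<in> carrier_vec k. B *\<^sub>v c = 0\<^sub>v n \<longrightarrow> c = 0\<^sub>v k"
    then have dist: "distinct (cols B)" using distinct_cols_if_trivial_kernel[OF B] by blast
    have "lin_indpt (set (cols B))"
    proof
      assume "lin_dep (set (cols B))"
      then show False using lin_depE[OF B _ dist] ker by metis
    qed
    then show "rank B = k" using lin_indpt_full_rank[OF B dist] by simp
  qed
  then show ?thesis using B unfolding mrank_def by simp
qed

definition orthonormal :: "nat \<Rightarrow> nat \<Rightarrow> (nat \<Rightarrow> real vec) \<Rightarrow> bool" where
  "orthonormal K k f \<longleftrightarrow> (\<forall>i<k. f i \<in> carrier_vec K) \<and>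
     (\<forall>i<k. \<forall>j<k. f i \<bullet> f j = (if i = j then 1 else 0))"

definition orth_proj :: "nat \<Rightarrow> nat \<Rightarrow> (nat \<Rightarrow> real vec) \<Rightarrow> real vec \<Rightarrow> real vec" where
  "orth_proj K k f v = vec K (\<lambda>b. \<Sum>i<k. (v \<bullet> f i) * f i $ b)"

(* The last clause says that every f i lies in the span of ys, phrased without spans:
   f i is orthogonal to the orthogonal complement of ys. *)
definition orthonormal_basis_of :: "nat \<Rightarrow> real vec list \<Rightarrow> nat \<Rightarrow> (nat \<Rightarrow> real vec) \<Rightarrow> bool" where
  "orthonormal_basis_of K ys k f \<longleftrightarrow> orthonormal K k f \<and>
     (\<forall>y \<in> set ys. orth_proj K k f y = y) \<and>
     (\<forall>i<k. \<forall>v \<in> carrier_vec K. (\<forall>y \<in> set ys. y \<bullet> v = 0) \<longrightarrow> f i \<bullet> v = 0)"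

lemma dim_orth_proj [simp]: "dim_vec (orth_proj K k f v) = K"
  unfolding orth_proj_def by simp

lemma orth_proj_carrier [simp]: "orth_proj K k f v \<in> carrier_vec K"
  unfolding carrier_vec_def by simp

lemma orth_proj_scalar_prod:
  assumes f: "\<And>i. i < k \<Longrightarrow> f i \<in> carrier_vec K" and u: "u \<in> carrier_vec K"
  shows "orth_proj K k f v \<bullet> u = (\<Sum>i<k. (v \<bullet> f i) * (f i \<bullet> u))"
proof -
  have "orth_proj K k f v \<bullet> u = (\<Sum>b<K. (\<Sum>i<k. (v \<bullet> f i) * f i $ b) * u $ b)"
    using u unfolding orth_proj_def scalar_prod_def by (simp add: atLeast0LessThan)
  also have "\<dots> = (\<Sum>i<k. \<Sum>b<K. (v \<bullet> f i) * (f i $ b * u $ b))"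
    by (simp add: sum_distrib_right mult.assoc sum.swap[of _ "{..<k}"])
  also have "\<dots> = (\<Sum>i<k. (v \<bullet> f i) * (f i \<bullet> u))"
    using f u by (simp add: scalar_prod_def sum_distrib_left atLeast0LessThan)
  finally show ?thesis .
qed

lemma orth_proj_scalar_prod_basis:
  assumes on: "orthonormal K k f" and j: "j < k"
  shows "orth_proj K k f v \<bullet> f j = v \<bullet> f j"
proof -
  have "orth_proj K k f v \<bullet> f j = (\<Sum>i<k. (v \<bullet> f i) * (f i \<bullet> f j))"
    using on j unfolding orthonormal_def by (intro orth_proj_scalar_prod) auto
  also have "\<dots> = (\<Sum>i<k. if i = j then v \<bullet> f j else 0)"
    using on j unfolding orthonormal_def by (intro sum.cong) auto
  finally show ?thesis using j by simp
qed

lemma orth_proj_Suc: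
  assumes "u \<in> carrier_vec K"
  shows "orth_proj K (Suc k) (f(k := u)) v = orth_proj K k f v + (v \<bullet> u) \<cdot>\<^sub>v u"
  using assms unfolding orth_proj_def by (intro eq_vecI) (auto intro!: sum.cong)

lemma orthonormal_basis_of_carrier:
  assumes "orthonormal_basis_of K ys k f" and "y \<in> set ys"
  shows "y \<in> carrier_vec K"
  using assms orth_proj_carrier unfolding orthonormal_basis_of_def by metis

lemma orth_proj_residual:
  assumes ob: "orthonormal_basis_of K ys k f" and y: "y \<in> carrier_vec K"
  defines "w \<equiv> y - orth_proj K k f y"
  shows "\<And>j. j < k \<Longrightarrow> w \<bullet> f j = 0"
    and "\<And>y'. y' \<in> set ys \<Longrightarrow> y' \<bullet> w = 0"
    and "y \<bullet> w = w \<bullet> w"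
    and "\<And>v. v \<in> carrier_vec K \<Longrightarrow> \<forall>y' \<in> set (y # ys). y' \<bullet> v = 0 \<Longrightarrow> w \<bullet> v = 0"
proof -
  have on: "orthonormal K k f" and f: "\<And>i. i < k \<Longrightarrow> f i \<in> carrier_vec K"
    and proj: "\<And>y'. y' \<in> set ys \<Longrightarrow> orth_proj K k f y' = y'"
    and span: "\<And>i v. i < k \<Longrightarrow> v \<in> carrier_vec K \<Longrightarrow> \<forall>y' \<in> set ys. y' \<bullet> v = 0 \<Longrightarrow> f i \<bullet> v = 0"
    using ob unfolding orthonormal_basis_of_def orthonormal_def by auto
  have w: "w \<in> carrier_vec K" using y by (simp add: w_def)
  show w_f: "w \<bullet> f j = 0" if "j < k" for j
    using y f[OF that] orth_proj_scalar_prod_basis[OF on that]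
    by (simp add: w_def minus_scalar_prod_distrib)
  have proj_w: "orth_proj K k f v \<bullet> w = 0" for v
    using w_f f w by (simp add: orth_proj_scalar_prod comm_scalar_prod[of w K])
  show "y' \<bullet> w = 0" if "y' \<in> set ys" for y'
    using proj_w[of y'] proj[OF that] by simp
  have "y = orth_proj K k f y + w" using y by (intro eq_vecI) (auto simp: w_def)
  then show "y \<bullet> w = w \<bullet> w"
    using w proj_w by (metis add_scalar_prod_distrib orth_proj_carrier add_0_left)
  show "w \<bullet> v = 0" if v: "v \<in> carrier_vec K" and "\<forall>y' \<in> set (y # ys). y' \<bullet> v = 0" for v
    using that span[OF _ v] y by (simp add: w_def minus_scalar_prod_distrib orth_proj_scalar_prod[OF f v])
qed

lemma orthonormal_basis_of_Cons:
  assumes ob: "orthonormal_basis_of K ys k f" and y: "y \<in> carrier_vec K"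
  shows "\<exists>k' f'. orthonormal_basis_of K (y # ys) k' f'"
proof -
  define w where "w = y - orth_proj K k f y"
  note residual = orth_proj_residual[OF ob y, folded w_def]
  have w: "w \<in> carrier_vec K" using y by (simp add: w_def)
  have y_eq: "y = orth_proj K k f y + w" using y by (intro eq_vecI) (auto simp: w_def)
  show ?thesis
  proof (cases "w = 0\<^sub>v K")
    case True
    then have "orth_proj K k f y = y" using y_eq y by simp
    then have "orthonormal_basis_of K (y # ys) k f"
      using ob unfolding orthonormal_basis_of_def by auto
    then show ?thesis by blast
  next
    case False
    have f: "\<And>i. i < k \<Longrightarrow> f i \<in> carrier_vec K"
      using ob unfolding orthonormal_basis_of_def orthonormal_def by auto
    define u where "u = (1 / sqrt (w \<bullet> w)) \<cdot>\<^sub>v w"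
    have ww: "w \<bullet> w > 0" using conjugate_square_greater_0_vec[OF w] False by simp
    have u: "u \<in> carrier_vec K" using w by (simp add: u_def)
    have "orthonormal K (Suc k) (f(k := u))"
      using ob w ww residual(1) f unfolding orthonormal_basis_of_def orthonormal_def
      by (auto simp: less_Suc_eq u_def comm_scalar_prod[of "f _" K w])
    moreover have "orth_proj K (Suc k) (f(k := u)) y' = y'" if "y' \<in> set (y # ys)" for y'
    proof -
      have "(y \<bullet> u) \<cdot>\<^sub>v u = w" using y w ww residual(3) by (intro eq_vecI) (auto simp: u_def)
      moreover have "(y' \<bullet> u) \<cdot>\<^sub>v u = 0\<^sub>v K" if "y' \<in> set ys"
        using residual(2)[OF that] w orthonormal_basis_of_carrier[OF ob that]
        by (auto simp: u_def intro!: eq_vecI)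
      ultimately show ?thesis
        using that y_eq ob u orthonormal_basis_of_carrier[OF ob]
        by (auto simp: orth_proj_Suc orthonormal_basis_of_def)
    qed
    moreover have "(f(k := u)) i \<bullet> v = 0"
      if "i < Suc k" "v \<in> carrier_vec K" "\<forall>y' \<in> set (y # ys). y' \<bullet> v = 0" for i v
      using that ob residual(4) w by (auto simp: u_def less_Suc_eq orthonormal_basis_of_def)
    ultimately have "orthonormal_basis_of K (y # ys) (Suc k) (f(k := u))"
      unfolding orthonormal_basis_of_def by blast
    then show ?thesis by blast
  qed
qed

lemma orthonormal_basis_of_exists:
  assumes "set ys \<subseteq> carrier_vec K"
  shows "\<exists>k f. orthonormal_basis_of K ys k f"
  using assms
proof (induction ys)
  case Nil
  have "orthonormal_basis_of K [] 0 f" for f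
    unfolding orthonormal_basis_of_def orthonormal_def by simp
  then show ?case by blast
next
  case (Cons y ys)
  then show ?case using orthonormal_basis_of_Cons by (metis insert_subset list.simps(15))
qed

lemma mrank_mult_transpose_row_basis:
  assumes Y: "Y \<in> carrier_mat M K" and ob: "orthonormal_basis_of K (rows Y) k f"
    and U: "U \<in> carrier_mat k K" and row_U: "\<And>i. i < k \<Longrightarrow> row U i = f i"
    and UU: "U * transpose_mat U = 1\<^sub>m k"
  shows "mrank (Y * transpose_mat U) = k"
proof -
  have "c = 0\<^sub>v k" if c: "c \<in> carrier_vec k" and "Y * transpose_mat U *\<^sub>v c = 0\<^sub>v M" for c
  proof -
    define w where "w = transpose_mat U *\<^sub>v c"
    have w: "w \<in> carrier_vec K" using U c by (simp add: w_def)
    have "Y *\<^sub>v w = 0\<^sub>v M" using that Y U by (simp add: w_def)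
    then have "\<forall>y \<in> set (rows Y). y \<bullet> w = 0"
      using Y by (auto simp: in_set_conv_nth) (metis index_mult_mat_vec index_zero_vec(1) carrier_matD(1))
    then have "U *\<^sub>v w = 0\<^sub>v k"
      using ob w row_U U by (intro eq_vecI) (auto simp: orthonormal_basis_of_def)
    moreover have "U *\<^sub>v w = c"
      using U c UU by (simp add: w_def assoc_mult_mat_vec[symmetric, of U k K "transpose_mat U" k])
    ultimately show ?thesis by simp
  qed
  moreover have "Y * transpose_mat U \<in> carrier_mat M k" using Y U by simp
  ultimately show ?thesis using mrank_eq_ncols_iff by blast
qed

lemma orthonormal_row_factorization:
  assumes Y: "Y \<in> carrier_mat M K"
  shows "\<exists>V U. V \<in> carrier_mat M (mrank Y) \<and> mrank V = mrank Y \<and> U \<in> carrier_mat (mrank Y) K \<and>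
           U * transpose_mat U = 1\<^sub>m (mrank Y) \<and> Y = V * U"
proof -
  have "set (rows Y) \<subseteq> carrier_vec K" using Y rows_carrier[of Y] by simp
  then obtain k f where ob: "orthonormal_basis_of K (rows Y) k f"
    using orthonormal_basis_of_exists by blast
  have on: "orthonormal K k f" using ob by (simp add: orthonormal_basis_of_def)
  then have f: "\<And>i. i < k \<Longrightarrow> f i \<in> carrier_vec K" by (simp add: orthonormal_def)
  have row_Y: "\<And>a. a < M \<Longrightarrow> row Y a \<in> set (rows Y)" using Y by (auto simp: in_set_conv_nth)
  define U where "U = mat k K (\<lambda>(i, j). f i $ j)"
  define V where "V = Y * transpose_mat U"
  have U: "U \<in> carrier_mat k K" and V: "V \<in> carrier_mat M k"
    using Y by (auto simp: U_def V_def)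
  have row_U: "row U i = f i" if "i < k" for i
    using f[OF that] that by (auto simp: U_def intro!: eq_vecI)
  have UU: "U * transpose_mat U = 1\<^sub>m k"
    using U on row_U by (intro eq_matI) (auto simp: orthonormal_def)
  have V_entry: "V $$ (a, i) = row Y a \<bullet> f i" if "a < M" "i < k" for a i
    using that Y U row_U by (simp add: V_def)
  have "Y = V * U"
  proof (rule eq_matI)
    fix a b assume "a < dim_row (V * U)" "b < dim_col (V * U)"
    then have ab: "a < M" "b < K" using V U by auto
    then have "(V * U) $$ (a, b) = (\<Sum>i<k. (row Y a \<bullet> f i) * f i $ b)"
      using V U V_entry by (simp add: scalar_prod_def U_def atLeast0LessThan)
    also have "\<dots> = orth_proj K k f (row Y a) $ b" using ab by (simp add: orth_proj_def)
    also have "\<dots> = Y $$ (a, b)" using ob row_Y ab Y by (simp add: orthonormal_basis_of_def)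
    finally show "Y $$ (a, b) = (V * U) $$ (a, b)" by simp
  qed (use Y V U in auto)
  moreover have "mrank V = k"
    unfolding V_def using Y ob U row_U UU by (rule mrank_mult_transpose_row_basis)
  moreover have "mrank Y = mrank V"
    using mrank_mult_right_invertible[OF V U _ UU] U \<open>Y = V * U\<close> by simp
  ultimately show ?thesis using U V UU by metis
qed

lemma nzrows_mult_le:
  assumes P: "P \<in> carrier_mat n m" and Q: "Q \<in> carrier_mat m k"
  shows "nzrows (P * Q) \<le> nzrows P"
proof -
  have "row (P * Q) i = 0\<^sub>v k" if "i < n" "row P i = 0\<^sub>v m" for i
    using that P Q by (intro eq_vecI) auto
  then have "{i. i < dim_row (P * Q) \<and> row (P * Q) i \<noteq> 0\<^sub>v (dim_col (P * Q))}
      \<subseteq> {i. i < dim_row P \<and> row P i \<noteq> 0\<^sub>v (dim_col P)}"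
    using P Q by auto
  then show ?thesis unfolding nzrows_def by (rule card_mono[rotated]) auto
qed

lemma l0_min_if_unique_sparse_solution:
  assumes W: "W \<in> carrier_mat N r" "A * W = V" "nzrows W \<le> s"
    and unique: "\<And>Z. Z \<in> carrier_mat N r \<Longrightarrow> A * Z = V \<Longrightarrow> nzrows Z \<le> s \<Longrightarrow> Z = W"
  shows "l0_min A V N r W" and "l0_min A V N r W' \<Longrightarrow> W' = W"
proof -
  have "nzrows W \<le> nzrows Z" if "Z \<in> carrier_mat N r" "A * Z = V" for Z
  proof (rule ccontr)
    assume "\<not> nzrows W \<le> nzrows Z"
    then have "Z = W" using unique that W(3) by simp
    then show False using \<open>\<not> nzrows W \<le> nzrows Z\<close> by simp
  qed
  then show "l0_min A V N r W" using W by (simp add: l0_min_def)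
  show "W' = W" if "l0_min A V N r W'"
  proof -
    have "W' \<in> carrier_mat N r" "A * W' = V" "nzrows W' \<le> nzrows W"
      using that W by (auto simp: l0_min_def)
    then show ?thesis using unique W(3) by force
  qed
qed

lemma sparse_factor_recovery:
  assumes A: "A \<in> carrier_mat M N" and X: "X \<in> carrier_mat N K" and sparse: "row_sparse s X"
    and inj: "inj_on (\<lambda>Z. A * Z) (Sigma_sr s r N K)"
    and V: "V \<in> carrier_mat M r" "mrank V = r" and U: "U \<in> carrier_mat r K"
    and UU: "U * transpose_mat U = 1\<^sub>m r" and AX: "A * X = V * U"
  shows "\<exists>W. l0_min A V N r W \<and> (\<forall>W'. l0_min A V N r W' \<longrightarrow> W' = W) \<and>
           row_sparse s W \<and> mrank W = r \<and> X = W * U"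
proof -
  have UT: "transpose_mat U \<in> carrier_mat K r" using U by simp
  have rank_solution: "mrank Z = r" if Z: "Z \<in> carrier_mat N r" and AZ: "A * Z = V" for Z
    unfolding mrank_eq_ncols_iff[OF Z]
  proof (intro ballI impI)
    fix c :: "real vec" assume c: "c \<in> carrier_vec r" and "Z *\<^sub>v c = 0\<^sub>v N"
    have "V *\<^sub>v c = A *\<^sub>v (Z *\<^sub>v c)" using A Z AZ c by (metis assoc_mult_mat_vec)
    also have "\<dots> = 0\<^sub>v M" using A \<open>Z *\<^sub>v c = 0\<^sub>v N\<close> by auto
    finally show "c = 0\<^sub>v r" using V c mrank_eq_ncols_iff by blast
  qed
  define W where "W = X * transpose_mat U"
  have W: "W \<in> carrier_mat N r" using X UT by (simp add: W_def)
  have AW: "A * W = V" using A X U UU V AX by (simp add: W_def assoc_mult_mat[symmetric, of A M N X K])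
  have X_Sigma: "X \<in> Sigma_sr s r N K"
    using X sparse rank_solution[OF W AW] mrank_mult_le[OF X UT] by (simp add: Sigma_sr_def W_def)
  have recover: "Z * U = X" if Z: "Z \<in> carrier_mat N r" "A * Z = V" "nzrows Z \<le> s" for Z
  proof -
    have "mrank (Z * U) = r"
      using mrank_mult_right_invertible[OF Z(1) U UT UU] rank_solution[OF Z(1,2)] by simp
    then have "Z * U \<in> Sigma_sr s r N K"
      using Z U nzrows_mult_le[OF Z(1) U] by (simp add: Sigma_sr_def row_sparse_def)
    moreover have "A * (Z * U) = A * X" using A Z U AX by (simp add: assoc_mult_mat[symmetric])
    ultimately show ?thesis using inj X_Sigma by (meson inj_onD)
  qed
  have unique: "Z = W" if Z: "Z \<in> carrier_mat N r" "A * Z = V" "nzrows Z \<le> s" for Z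
  proof -
    have "Z = Z * U * transpose_mat U" using Z U UT UU by (simp add: assoc_mult_mat)
    then show ?thesis using recover[OF Z] by (simp add: W_def)
  qed
  have W_sparse: "nzrows W \<le> s"
    using nzrows_mult_le[OF X UT] sparse by (simp add: W_def row_sparse_def)
  have "l0_min A V N r W" "\<forall>W'. l0_min A V N r W' \<longrightarrow> W' = W"
    using l0_min_if_unique_sparse_solution[OF W AW W_sparse unique] by blast+
  moreover have "row_sparse s W" using W_sparse by (simp add: row_sparse_def)
  ultimately show ?thesis using rank_solution[OF W AW] recover[OF W AW W_sparse] by metis
qed

theorem theorem4:
  fixes M N K s :: nat and A X :: "real mat"
  assumes "M > 0" "N > 0" "K > 0"
    and "A \<in> carrier_mat M N" and "X \<in> carrier_mat N K"
    and "row_sparse s X"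
    and "inj_on (\<lambda>Z. A * Z) (Sigma_sr s (mrank (A * X)) N K)"
  shows "let Y = A * X; r = mrank Y in
     (\<exists>V U. V \<in> carrier_mat M r \<and> mrank V = r \<and> U \<in> carrier_mat r K \<and>
            U * transpose_mat U = 1\<^sub>m r \<and> Y = V * U) \<and>
     (\<forall>V U. V \<in> carrier_mat M r \<and> mrank V = r \<and> U \<in> carrier_mat r K \<and>
            U * transpose_mat U = 1\<^sub>m r \<and> Y = V * U \<longrightarrow>
        (\<exists>W. l0_min A V N r W \<and> (\<forall>W'. l0_min A V N r W' \<longrightarrow> W' = W) \<and>
             row_sparse s W \<and> mrank W = r \<and> X = W * U))"
proof -
  have "A * X \<in> carrier_mat M K" using assms(4,5) by simp
  then show ?thesis
    unfolding Let_def
    using orthonormal_row_factorization sparse_factor_recovery[OF assms(4-7)] by blast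
qed

end
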